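(* Let $\Gamma$ be a finite graph and let $z\in H^1(\Gamma,\mathbb{Z})$ be nonzero. Then $z$ is a coedge, i.e. $z=\pm e^*$ for some edge $e$ of $\Gamma$, if and only if $z(c)\in\{+1,0,-1\}$ for every $(0,1)$-cycle $c$ of $\Gamma$.
   Context: Edges of $\Gamma$ are oriented; $H_1(\Gamma,\mathbb{Z})\subset\bigoplus\mathbb{Z}e_i$ is the cycle group and $H^1(\Gamma,\mathbb{Z})$ its dual (cokernel of the coboundary $C^0\to\bigoplus\mathbb{Z}e_i^*$); the image of $e_i^*$ in $H^1$ is the coedge $e_i^*$ (up to sign, depending on the chosen orientation). A $(0,1)$-cycle is a cycle in which every edge appears with coefficient in $\{+1,0,-1\}$, i.e. a sum of simple cycles with pairwise disjoint edge supports. *)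

theory Defs
  imports Main
begin

text \<open>A finite oriented (multi)graph: finite vertex set V, finite edge set E,
  each edge e \<in> E oriented from src e to tgt e (loops and parallel edges allowed).\<close>

definition graph :: "'v set \<Rightarrow> 'e set \<Rightarrow> ('e \<Rightarrow> 'v) \<Rightarrow> ('e \<Rightarrow> 'v) \<Rightarrow> bool" where
  "graph V E src tgt \<longleftrightarrow> finite V \<and> finite E \<and> (\<forall>e\<in>E. src e \<in> V \<and> tgt e \<in> V)"

text \<open>1-chains are integer functions on edges supported on E; 1-cycles are those with
  zero boundary, i.e. elements of H_1(Gamma,Z).\<close>
definition is_cycle :: "'v set \<Rightarrow> 'e set \<Rightarrow> ('e \<Rightarrow> 'v) \<Rightarrow> ('e \<Rightarrow> 'v) \<Rightarrow> ('e \<Rightarrow> int) \<Rightarrow> bool" where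
  "is_cycle V E src tgt c \<longleftrightarrow> (\<forall>e. e \<notin> E \<longrightarrow> c e = 0) \<and>
     (\<forall>v\<in>V. (\<Sum>e\<in>{e\<in>E. tgt e = v}. c e) - (\<Sum>e\<in>{e\<in>E. src e = v}. c e) = 0)"

definition is_01_cycle :: "'v set \<Rightarrow> 'e set \<Rightarrow> ('e \<Rightarrow> 'v) \<Rightarrow> ('e \<Rightarrow> 'v) \<Rightarrow> ('e \<Rightarrow> int) \<Rightarrow> bool" where
  "is_01_cycle V E src tgt c \<longleftrightarrow> is_cycle V E src tgt c \<and> (\<forall>e\<in>E. c e \<in> {1, 0, -1})"

text \<open>Coboundary C^0 \<rightarrow> C^1. A 1-cochain f (an integer function on E) represents a class
  in H^1(Gamma,Z) = C^1 / image of the coboundary; f and g represent the same class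
  iff f - g is a coboundary on E.\<close>
definition is_coboundary :: "'v set \<Rightarrow> 'e set \<Rightarrow> ('e \<Rightarrow> 'v) \<Rightarrow> ('e \<Rightarrow> 'v) \<Rightarrow> ('e \<Rightarrow> int) \<Rightarrow> bool" where
  "is_coboundary V E src tgt f \<longleftrightarrow>
     (\<exists>g :: 'v \<Rightarrow> int. \<forall>e\<in>E. f e = g (tgt e) - g (src e))"

definition cohomologous :: "'v set \<Rightarrow> 'e set \<Rightarrow> ('e \<Rightarrow> 'v) \<Rightarrow> ('e \<Rightarrow> 'v) \<Rightarrow> ('e \<Rightarrow> int) \<Rightarrow> ('e \<Rightarrow> int) \<Rightarrow> bool" where
  "cohomologous V E src tgt f g \<longleftrightarrow> is_coboundary V E src tgt (\<lambda>e. f e - g e)"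

definition dual_edge :: "'e \<Rightarrow> 'e \<Rightarrow> int" where
  "dual_edge e = (\<lambda>e'. if e' = e then 1 else 0)"

definition pairing :: "'e set \<Rightarrow> ('e \<Rightarrow> int) \<Rightarrow> ('e \<Rightarrow> int) \<Rightarrow> int" where
  "pairing E f c = (\<Sum>e\<in>E. f e * c e)"

end

theory Submission
  imports Defs
begin

text \<open>Necessity is immediate, since a cochain cohomologous to \<open>s e*\<close> pairs with a cycle \<open>c\<close> to
  \<open>s c(e)\<close>. Sufficiency is proved by induction on the edges. When an edge \<open>e0\<close> is added to a
  graph on which \<open>z\<close> is cohomologous to \<open>0\<close> or to \<open>s e1*\<close>, \<open>z\<close> becomes cohomologous to
  \<open>w = s e1* + d e0*\<close>, and it remains to reduce such a \<open>w\<close> to a single \<open>\<plusminus>f*\<close>. If every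
  (0,1)-cycle through \<open>e0\<close> also passes through \<open>e1\<close>, the vertices connected to \<open>tgt e0\<close> without
  using \<open>e0\<close>, \<open>e1\<close> give a potential reducing \<open>w\<close> to a multiple of \<open>e1*\<close>. Otherwise such a cycle
  \<open>C\<close> forces \<open>d = \<plusminus>1\<close>, and an augmenting-path argument in the residual graph of \<open>C - d e0*\<close>
  produces either a (0,1)-cycle on which \<open>w\<close> takes the value 2 or a cut whose indicator
  potential makes \<open>w\<close> cohomologous to some \<open>\<plusminus>f*\<close>.\<close>

definition boundary :: "'e set \<Rightarrow> ('e \<Rightarrow> 'v) \<Rightarrow> ('e \<Rightarrow> 'v) \<Rightarrow> ('e \<Rightarrow> int) \<Rightarrow> 'v \<Rightarrow> int" where
  "boundary E src tgt c v = (\<Sum>e\<in>{e\<in>E. tgt e = v}. c e) - (\<Sum>e\<in>{e\<in>E. src e = v}. c e)"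

definition unit_on_01_cycles :: "'v set \<Rightarrow> 'e set \<Rightarrow> ('e \<Rightarrow> 'v) \<Rightarrow> ('e \<Rightarrow> 'v) \<Rightarrow> ('e \<Rightarrow> int) \<Rightarrow> bool" where
  "unit_on_01_cycles V E src tgt z \<longleftrightarrow> (\<forall>c. is_01_cycle V E src tgt c \<longrightarrow> pairing E z c \<in> {1, 0, -1})"

definition unit_chain :: "'e set \<Rightarrow> ('e \<Rightarrow> int) \<Rightarrow> bool" where
  "unit_chain E c \<longleftrightarrow> (\<forall>e. e \<notin> E \<longrightarrow> c e = 0) \<and> (\<forall>e. c e \<in> {1, 0, -1})"

lemma is_cycle_iff_boundary:
  "is_cycle V E src tgt c \<longleftrightarrow> (\<forall>e. e \<notin> E \<longrightarrow> c e = 0) \<and> (\<forall>v\<in>V. boundary E src tgt c v = 0)"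
  unfolding is_cycle_def boundary_def by simp

lemma is_01_cycle_iff_unit_chain:
  "is_01_cycle V E src tgt c \<longleftrightarrow> unit_chain E c \<and> (\<forall>v\<in>V. boundary E src tgt c v = 0)"
  unfolding is_01_cycle_def is_cycle_iff_boundary unit_chain_def by auto

lemma boundary_add: "boundary E src tgt (\<lambda>x. a x + b x) v = boundary E src tgt a v + boundary E src tgt b v"
  unfolding boundary_def by (simp add: sum.distrib)

lemma boundary_diff: "boundary E src tgt (\<lambda>x. a x - b x) v = boundary E src tgt a v - boundary E src tgt b v"
  unfolding boundary_def by (simp add: sum_subtractf)

lemma boundary_scale: "boundary E src tgt (\<lambda>x. k * a x) v = k * boundary E src tgt a v"
  unfolding boundary_def by (simp add: sum_distrib_left right_diff_distrib)

lemma boundary_dual_edge: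
  "finite E \<Longrightarrow> e \<in> E \<Longrightarrow>
    boundary E src tgt (dual_edge e) v = (if tgt e = v then 1 else 0) - (if src e = v then 1 else 0)"
  unfolding boundary_def dual_edge_def by simp

lemma cohomologousI:
  "(\<And>e. e \<in> E \<Longrightarrow> z e - w e = g (tgt e) - g (src e)) \<Longrightarrow> cohomologous V E src tgt z w"
  unfolding cohomologous_def is_coboundary_def by blast

lemma cohomologousE:
  assumes "cohomologous V E src tgt z w"
  obtains g where "\<And>e. e \<in> E \<Longrightarrow> z e - w e = g (tgt e) - g (src e)"
proof -
  from assms obtain g where "\<forall>e\<in>E. z e - w e = g (tgt e) - g (src e)"
    unfolding cohomologous_def is_coboundary_def by blast
  then show ?thesis using that by blast
qed

lemma cohomologous_trans:
  assumes "cohomologous V E src tgt z w" "cohomologous V E src tgt w u"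
  shows "cohomologous V E src tgt z u"
proof -
  obtain g where "\<And>e. e \<in> E \<Longrightarrow> z e - w e = g (tgt e) - g (src e)"
    using assms(1) by (rule cohomologousE) blast
  moreover obtain h where "\<And>e. e \<in> E \<Longrightarrow> w e - u e = h (tgt e) - h (src e)"
    using assms(2) by (rule cohomologousE) blast
  ultimately show ?thesis
    by (intro cohomologousI[of E z u "\<lambda>x. g x + h x"]) (smt (verit))
qed

lemma cohomologous_coboundary:
  assumes "cohomologous V E src tgt z w" "is_coboundary V E src tgt w"
  shows "is_coboundary V E src tgt z"
  using cohomologous_trans[OF assms(1), of "\<lambda>_. 0"] assms(2)
  unfolding cohomologous_def by simp

lemma sum_regroup_by_endpoint:
  fixes g :: "'v \<Rightarrow> 'a::semiring_0" and c :: "'e \<Rightarrow> 'a"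
  assumes "finite V" "finite E" "\<forall>e\<in>E. f e \<in> V"
  shows "(\<Sum>e\<in>E. g (f e) * c e) = (\<Sum>v\<in>V. g v * (\<Sum>e\<in>{e\<in>E. f e = v}. c e))"
proof -
  have "(\<Sum>e\<in>E. g (f e) * c e) = (\<Sum>v\<in>V. \<Sum>e\<in>{e\<in>E. f e = v}. g (f e) * c e)"
    using assms(3) by (intro sum.group[OF assms(2,1), symmetric]) auto
  also have "\<dots> = (\<Sum>v\<in>V. \<Sum>e\<in>{e\<in>E. f e = v}. g v * c e)"
    by (intro sum.cong) auto
  finally show ?thesis by (simp add: sum_distrib_left)
qed

lemma pairing_coboundary:
  assumes "graph V E src tgt"
  shows "pairing E (\<lambda>e. g (tgt e) - g (src e)) c = (\<Sum>v\<in>V. g v * boundary E src tgt c v)"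
proof -
  have fin: "finite V" "finite E" and ends: "\<forall>e\<in>E. src e \<in> V" "\<forall>e\<in>E. tgt e \<in> V"
    using assms unfolding graph_def by auto
  have "pairing E (\<lambda>e. g (tgt e) - g (src e)) c = (\<Sum>e\<in>E. g (tgt e) * c e) - (\<Sum>e\<in>E. g (src e) * c e)"
    unfolding pairing_def by (simp add: left_diff_distrib sum_subtractf)
  also have "\<dots> = (\<Sum>v\<in>V. g v * boundary E src tgt c v)"
    unfolding sum_regroup_by_endpoint[OF fin ends(1)] sum_regroup_by_endpoint[OF fin ends(2)]
    by (simp add: boundary_def sum_subtractf right_diff_distrib)
  finally show ?thesis .
qed

lemma pairing_coboundary_cycle:
  assumes "graph V E src tgt" "is_cycle V E src tgt c"
  shows "pairing E (\<lambda>e. g (tgt e) - g (src e)) c = 0"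
  using assms(2) by (simp add: pairing_coboundary[OF assms(1)] is_cycle_iff_boundary)

lemma pairing_cohomologous:
  assumes "graph V E src tgt" "is_cycle V E src tgt c" "cohomologous V E src tgt z w"
  shows "pairing E z c = pairing E w c"
proof -
  obtain g where g: "\<And>e. e \<in> E \<Longrightarrow> z e - w e = g (tgt e) - g (src e)"
    using assms(3) by (rule cohomologousE) blast
  have "pairing E z c - pairing E w c = pairing E (\<lambda>e. g (tgt e) - g (src e)) c"
    unfolding pairing_def by (simp add: g left_diff_distrib [symmetric] sum_subtractf [symmetric])
  then show ?thesis using pairing_coboundary_cycle[OF assms(1,2)] by simp
qed

lemma pairing_add: "pairing E f (\<lambda>x. a x + b x) = pairing E f a + pairing E f b"
  unfolding pairing_def by (simp add: distrib_left sum.distrib)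

lemma pairing_scaled_dual_edge:
  assumes "finite E" "e \<in> E"
  shows "pairing E (\<lambda>x. k * dual_edge e x) c = k * c e"
    and "pairing E f (\<lambda>x. k * dual_edge e x) = f e * k"
  using assms by (simp_all add: pairing_def dual_edge_def if_distrib if_distribR cong: if_cong)

lemma pairing_two_dual_edges:
  assumes "finite E" "e0 \<in> E" "e1 \<in> E"
  shows "pairing E (\<lambda>x. s * dual_edge e1 x + d * dual_edge e0 x) c = s * c e1 + d * c e0"
proof -
  have "pairing E (\<lambda>x. s * dual_edge e1 x + d * dual_edge e0 x) c =
      pairing E (\<lambda>x. s * dual_edge e1 x) c + pairing E (\<lambda>x. d * dual_edge e0 x) c"
    unfolding pairing_def by (simp add: distrib_right sum.distrib)
  then show ?thesis using pairing_scaled_dual_edge(1)[OF assms(1)] assms(2,3) by simp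
qed

subsection \<open>Simple paths and reachability\<close>

text \<open>\<open>A e \<sigma>\<close> permits traversing edge \<open>e\<close> along (\<open>\<sigma> = 1\<close>) or against (\<open>\<sigma> = -1\<close>) its
  orientation; \<open>S\<close> is the set of visited vertices and \<open>p\<close> the 1-chain of the path.\<close>

inductive simple_path ::
  "('e \<Rightarrow> int \<Rightarrow> bool) \<Rightarrow> ('e \<Rightarrow> 'v) \<Rightarrow> ('e \<Rightarrow> 'v) \<Rightarrow> 'v \<Rightarrow> 'v \<Rightarrow> 'v set \<Rightarrow> ('e \<Rightarrow> int) \<Rightarrow> bool"
  for A src tgt u where
  start: "simple_path A src tgt u u {u} (\<lambda>_. 0)"
| forward: "simple_path A src tgt u v S p \<Longrightarrow> A e 1 \<Longrightarrow> src e = v \<Longrightarrow> tgt e \<notin> S \<Longrightarrow>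
    simple_path A src tgt u (tgt e) (insert (tgt e) S) (\<lambda>x. p x + dual_edge e x)"
| backward: "simple_path A src tgt u v S p \<Longrightarrow> A e (-1) \<Longrightarrow> tgt e = v \<Longrightarrow> src e \<notin> S \<Longrightarrow>
    simple_path A src tgt u (src e) (insert (src e) S) (\<lambda>x. p x - dual_edge e x)"

lemma simple_path_chain:
  assumes "simple_path A src tgt u v S p" "finite E" and A_E: "{e. \<exists>\<sigma>. A e \<sigma>} \<subseteq> E"
  shows "v \<in> S \<and>
    (\<forall>e. p e \<noteq> 0 \<longrightarrow> src e \<in> S \<and> tgt e \<in> S \<and> p e \<in> {1, -1} \<and> A e (p e)) \<and>
    (\<forall>x. boundary E src tgt p x = (if x = v then 1 else 0) - (if x = u then 1 else 0))"
  using assms(1)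
proof (induction rule: simple_path.induct)
  case start
  then show ?case unfolding boundary_def by simp
next
  case (forward v S p e)
  have "p e = 0" and "e \<in> E" using forward A_E by blast+
  then show ?case using forward
    unfolding boundary_add boundary_dual_edge[OF \<open>finite E\<close> \<open>e \<in> E\<close>]
    by (auto simp: dual_edge_def)
next
  case (backward v S p e)
  have "p e = 0" and "e \<in> E" using backward A_E by blast+
  then show ?case using backward
    unfolding boundary_diff boundary_dual_edge[OF \<open>finite E\<close> \<open>e \<in> E\<close>]
    by (auto simp: dual_edge_def)
qed

lemma simple_path_prefix:
  "simple_path A src tgt u v S p \<Longrightarrow> x \<in> S \<Longrightarrow> \<exists>S' p'. simple_path A src tgt u x S' p'"
proof (induction arbitrary: x rule: simple_path.induct)
  case start
  then show ?case using simple_path.start[of A src tgt u] by auto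
next
  case (forward v S p e)
  then show ?case using simple_path.forward[OF forward.hyps] by (cases "x = tgt e") auto
next
  case (backward v S p e)
  then show ?case using simple_path.backward[OF backward.hyps] by (cases "x = src e") auto
qed

definition reachable :: "('e \<Rightarrow> int \<Rightarrow> bool) \<Rightarrow> ('e \<Rightarrow> 'v) \<Rightarrow> ('e \<Rightarrow> 'v) \<Rightarrow> 'v \<Rightarrow> 'v set" where
  "reachable A src tgt u = {x. \<exists>S p. simple_path A src tgt u x S p}"

lemma reachable_start: "u \<in> reachable A src tgt u"
  unfolding reachable_def using simple_path.start[of A src tgt u] by blast

lemma reachable_forward:
  assumes "src e \<in> reachable A src tgt u" "A e 1"
  shows "tgt e \<in> reachable A src tgt u"
proof -
  obtain S p where p: "simple_path A src tgt u (src e) S p"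
    using assms(1) unfolding reachable_def by blast
  show ?thesis
    using simple_path_prefix[OF p] simple_path.forward[OF p assms(2) refl]
    unfolding reachable_def by (cases "tgt e \<in> S") auto
qed

lemma reachable_backward:
  assumes "tgt e \<in> reachable A src tgt u" "A e (-1)"
  shows "src e \<in> reachable A src tgt u"
proof -
  obtain S p where p: "simple_path A src tgt u (tgt e) S p"
    using assms(1) unfolding reachable_def by blast
  show ?thesis
    using simple_path_prefix[OF p] simple_path.backward[OF p assms(2) refl]
    unfolding reachable_def by (cases "src e \<in> S") auto
qed

lemma reachable_src_iff_tgt:
  assumes "A e 1" "A e (-1)"
  shows "src e \<in> reachable A src tgt u \<longleftrightarrow> tgt e \<in> reachable A src tgt u"
  using assms reachable_forward[where A=A and u=u] reachable_backward[where A=A and u=u] by blast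

lemma reachable_unit_chain:
  assumes "finite E" "{e. \<exists>\<sigma>. A e \<sigma>} \<subseteq> E" "v \<in> reachable A src tgt u"
  obtains p where "unit_chain E p" "\<And>e. p e \<noteq> 0 \<Longrightarrow> A e (p e)"
    "\<And>x. boundary E src tgt p x = (if x = v then 1 else 0) - (if x = u then 1 else 0)"
proof -
  obtain S p where "simple_path A src tgt u v S p"
    using assms(3) unfolding reachable_def by blast
  note chain = simple_path_chain[OF this assms(1,2)]
  have "unit_chain E p"
    unfolding unit_chain_def
  proof (intro conjI allI impI)
    fix e assume "e \<notin> E"
    then show "p e = 0" using chain assms(2) by blast
  next
    fix e show "p e \<in> {1, 0, -1}" using chain by auto
  qed
  with chain show ?thesis by (intro that) auto
qed

lemma closing_path_cycle:
  assumes "finite E" and q: "unit_chain E q"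
    and q_boundary: "\<And>v. v \<in> V \<Longrightarrow> boundary E src tgt q v = (if v = u then 1 else 0) - (if v = x then 1 else 0)"
    and A_E: "{e. \<exists>\<sigma>. A e \<sigma>} \<subseteq> E" and A_q: "\<And>e. q e \<noteq> 0 \<Longrightarrow> \<not> A e (q e)"
    and "x \<in> reachable A src tgt u"
  obtains p where "is_01_cycle V E src tgt (\<lambda>e. q e + p e)" "\<And>e. p e \<noteq> 0 \<Longrightarrow> A e (p e)"
proof -
  obtain p where p: "unit_chain E p" "\<And>e. p e \<noteq> 0 \<Longrightarrow> A e (p e)"
    "\<And>y. boundary E src tgt p y = (if y = x then 1 else 0) - (if y = u then 1 else 0)"
    by (rule reachable_unit_chain[OF assms(1) A_E assms(6)]) (rule that)
  have "unit_chain E (\<lambda>e. q e + p e)"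
    unfolding unit_chain_def
  proof (intro conjI allI impI)
    fix e
    show "e \<notin> E \<Longrightarrow> q e + p e = 0" using q p(1) by (simp add: unit_chain_def)
    have "p e \<noteq> 0 \<Longrightarrow> q e \<noteq> p e" using A_q p(2) by metis
    moreover have "q e \<in> {1, 0, -1}" "p e \<in> {1, 0, -1}" using q p(1) by (auto simp: unit_chain_def)
    ultimately show "q e + p e \<in> {1, 0, -1}" by auto
  qed
  moreover have "boundary E src tgt (\<lambda>e. q e + p e) v = 0" if "v \<in> V" for v
    using q_boundary[OF that] p(3)[of v] by (simp add: boundary_add)
  ultimately show ?thesis using p(2) by (intro that) (auto simp: is_01_cycle_iff_unit_chain)
qed

subsection \<open>Cuts from reachability\<close>

text \<open>The residual graph of the unit flow \<open>P\<close> on \<open>F\<close>, as in augmenting-path arguments.\<close>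

definition residual :: "'e set \<Rightarrow> ('e \<Rightarrow> int) \<Rightarrow> 'e \<Rightarrow> int \<Rightarrow> bool" where
  "residual F P e \<sigma> \<longleftrightarrow> e \<in> F \<and> P e \<noteq> \<sigma>"

lemma residual_cut_crossing:
  assumes "e \<in> F" "T = reachable (residual F P) src tgt u"
  shows "(of_bool (tgt e \<in> T) - of_bool (src e \<in> T)) * P e = - of_bool ((src e \<in> T) \<noteq> (tgt e \<in> T))"
proof -
  have "P e = 1" if "src e \<in> T" "tgt e \<notin> T"
    using that reachable_forward[where A="residual F P" and u=u] assms by (auto simp: residual_def)
  moreover have "P e = -1" if "tgt e \<in> T" "src e \<notin> T"
    using that reachable_backward[where A="residual F P" and u=u] assms by (auto simp: residual_def)
  ultimately show ?thesis by auto
qed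

lemma separating_potential:
  assumes G: "graph V E src tgt" and "e0 \<in> E" "e0 \<notin> B"
    and no_cycle: "\<And>C. is_01_cycle V E src tgt C \<Longrightarrow> \<forall>e\<in>B. C e = 0 \<Longrightarrow> C e0 = 0"
  obtains g :: "'v \<Rightarrow> int" where "g (tgt e0) - g (src e0) = 1"
    "\<And>e. e \<in> E \<Longrightarrow> e \<noteq> e0 \<Longrightarrow> e \<notin> B \<Longrightarrow> g (tgt e) = g (src e)"
proof -
  have fin: "finite E" using G by (simp add: graph_def)
  define A where "A = residual (E - insert e0 B) (\<lambda>_. 0)"
  define T where "T = reachable A src tgt (tgt e0)"
  have "src e0 \<notin> T"
  proof
    assume "src e0 \<in> T"
    moreover have "unit_chain E (dual_edge e0)"
      using \<open>e0 \<in> E\<close> by (auto simp: unit_chain_def dual_edge_def)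
    moreover have "boundary E src tgt (dual_edge e0) v =
        (if v = tgt e0 then 1 else 0) - (if v = src e0 then 1 else 0)" for v
      by (simp add: boundary_dual_edge[OF fin \<open>e0 \<in> E\<close>])
    moreover have "{e. \<exists>\<sigma>. A e \<sigma>} \<subseteq> E" "\<And>e. dual_edge e0 e \<noteq> 0 \<Longrightarrow> \<not> A e (dual_edge e0 e)"
      by (auto simp: A_def residual_def dual_edge_def split: if_splits)
    ultimately obtain p where cycle: "is_01_cycle V E src tgt (\<lambda>e. dual_edge e0 e + p e)"
      and p: "\<And>e. p e \<noteq> 0 \<Longrightarrow> A e (p e)"
      using closing_path_cycle[OF fin, of "dual_edge e0" V src tgt "tgt e0" "src e0" A] T_def by blast
    have "\<forall>e\<in>B. dual_edge e0 e + p e = 0"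
      using p \<open>e0 \<notin> B\<close> unfolding A_def residual_def dual_edge_def by auto
    moreover have "dual_edge e0 e0 + p e0 = 1"
      using p unfolding A_def residual_def dual_edge_def by auto
    ultimately show False using no_cycle[OF cycle] by simp
  qed
  show ?thesis
  proof (rule that[of "\<lambda>v. of_bool (v \<in> T)"])
    show "of_bool (tgt e0 \<in> T) - of_bool (src e0 \<in> T) = (1::int)"
      using \<open>src e0 \<notin> T\<close> reachable_start by (simp add: T_def)
    fix e assume "e \<in> E" "e \<noteq> e0" "e \<notin> B"
    then have "src e \<in> T \<longleftrightarrow> tgt e \<in> T"
      unfolding T_def by (intro reachable_src_iff_tgt) (simp_all add: A_def residual_def)
    then show "of_bool (tgt e \<in> T) = (of_bool (src e \<in> T) :: int)" by simp
  qed
qed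

lemma dual_edge_coboundary_if_no_cycle:
  assumes "graph V E src tgt" "e \<in> E" "\<And>C. is_01_cycle V E src tgt C \<Longrightarrow> C e = 0"
  shows "is_coboundary V E src tgt (dual_edge e)"
proof -
  obtain g :: "_ \<Rightarrow> int" where "g (tgt e) - g (src e) = 1"
    "\<And>e'. e' \<in> E \<Longrightarrow> e' \<noteq> e \<Longrightarrow> g (tgt e') = g (src e')"
  proof (rule separating_potential[OF assms(1,2), where B="{}"])
    show "\<And>C. is_01_cycle V E src tgt C \<Longrightarrow> \<forall>e'\<in>{}. C e' = 0 \<Longrightarrow> C e = 0"
      by (rule assms(3))
  qed (simp_all add: that)
  then have "\<forall>e'\<in>E. dual_edge e e' = g (tgt e') - g (src e')"
    unfolding dual_edge_def by auto
  then show ?thesis unfolding is_coboundary_def by blast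
qed

lemma coedge_coefficient_unit:
  assumes G: "graph V E src tgt" and "e \<in> E"
    and unit: "unit_on_01_cycles V E src tgt w"
    and not_cob: "\<not> is_coboundary V E src tgt w"
    and co: "cohomologous V E src tgt w (\<lambda>x. k * dual_edge e x)"
  shows "k \<in> {1, -1}"
proof -
  have fin: "finite E" using G by (simp add: graph_def)
  obtain g where g: "\<And>x. x \<in> E \<Longrightarrow> w x - k * dual_edge e x = g (tgt x) - g (src x)"
    using co by (rule cohomologousE) blast
  have "k \<noteq> 0"
  proof
    assume "k = 0"
    then have "\<forall>x\<in>E. w x = g (tgt x) - g (src x)" using g by simp
    then show False using not_cob unfolding is_coboundary_def by blast
  qed
  have "\<exists>c. is_01_cycle V E src tgt c \<and> c e \<noteq> 0"
  proof (rule ccontr)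
    assume "\<nexists>c. is_01_cycle V E src tgt c \<and> c e \<noteq> 0"
    then obtain h where h: "\<forall>x\<in>E. dual_edge e x = h (tgt x) - h (src x)"
      using dual_edge_coboundary_if_no_cycle[OF G \<open>e \<in> E\<close>] unfolding is_coboundary_def by blast
    have "\<forall>x\<in>E. w x = (g (tgt x) + k * h (tgt x)) - (g (src x) + k * h (src x))"
    proof
      fix x assume "x \<in> E"
      then have "w x = k * (h (tgt x) - h (src x)) + (g (tgt x) - g (src x))"
        using g[of x] h by (simp add: diff_eq_eq)
      then show "w x = (g (tgt x) + k * h (tgt x)) - (g (src x) + k * h (src x))"
        by (simp add: algebra_simps)
    qed
    then have "is_coboundary V E src tgt w"
      unfolding is_coboundary_def by - (rule exI[of _ "\<lambda>v. g v + k * h v"], simp)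
    then show False using not_cob by blast
  qed
  then obtain c where c: "is_01_cycle V E src tgt c" "c e \<noteq> 0" by blast
  have "is_cycle V E src tgt c" using c(1) by (simp add: is_01_cycle_def)
  then have "pairing E w c = pairing E (\<lambda>x. k * dual_edge e x) c"
    by (rule pairing_cohomologous[OF G _ co])
  also have "\<dots> = k * c e" by (rule pairing_scaled_dual_edge(1)[OF fin \<open>e \<in> E\<close>])
  finally have "pairing E w c = k * c e" .
  moreover have "c e \<in> {1, -1}" using c \<open>e \<in> E\<close> by (auto simp: is_01_cycle_def)
  ultimately show ?thesis using c(1) unit[unfolded unit_on_01_cycles_def] \<open>k \<noteq> 0\<close> by auto
qed

subsection \<open>Cochains supported on two edges\<close>

lemma two_coedges_no_cycle_avoiding_e1:
  assumes G: "graph V E src tgt" and "e0 \<in> E" "e1 \<in> E" "e0 \<noteq> e1"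
    and unit: "unit_on_01_cycles V E src tgt w"
    and not_cob: "\<not> is_coboundary V E src tgt w"
    and w: "w = (\<lambda>x. s * dual_edge e1 x + d * dual_edge e0 x)"
    and no_cycle: "\<And>C. is_01_cycle V E src tgt C \<Longrightarrow> C e1 = 0 \<Longrightarrow> C e0 = 0"
  shows "\<exists>f\<in>E. \<exists>\<sigma>\<in>{1, -1::int}. cohomologous V E src tgt w (\<lambda>x. \<sigma> * dual_edge f x)"
proof -
  obtain g :: "_ \<Rightarrow> int" where g0: "g (tgt e0) - g (src e0) = 1"
    and g: "\<And>e. e \<in> E \<Longrightarrow> e \<noteq> e0 \<Longrightarrow> e \<notin> {e1} \<Longrightarrow> g (tgt e) = g (src e)"
  proof (rule separating_potential[OF G \<open>e0 \<in> E\<close>, where B="{e1}"])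
    show "\<And>C. is_01_cycle V E src tgt C \<Longrightarrow> \<forall>e\<in>{e1}. C e = 0 \<Longrightarrow> C e0 = 0"
      using no_cycle by simp
  qed (use \<open>e0 \<noteq> e1\<close> that in simp_all)
  define j where "j = g (tgt e1) - g (src e1)"
  have co: "cohomologous V E src tgt w (\<lambda>x. (s - d * j) * dual_edge e1 x)"
  proof (rule cohomologousI[where g="\<lambda>v. d * g v"])
    fix e assume "e \<in> E"
    then show "w e - (s - d * j) * dual_edge e1 e = d * g (tgt e) - d * g (src e)"
      using g0 g[of e] \<open>e0 \<noteq> e1\<close> unfolding w j_def dual_edge_def
      by (cases "e = e0"; cases "e = e1") (simp_all add: algebra_simps)
  qed
  then have "s - d * j \<in> {1, -1}"
    by (rule coedge_coefficient_unit[OF G \<open>e1 \<in> E\<close> unit not_cob])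
  with co \<open>e1 \<in> E\<close> show ?thesis by blast
qed

text \<open>Here \<open>P + d e0*\<close> is a (0,1)-cycle through \<open>e0\<close> avoiding \<open>e1\<close>. A path from the head
  of \<open>s e1\<close> back to its tail in the residual graph of \<open>P\<close> would close \<open>P + d e0* + s e1*\<close>
  into a (0,1)-cycle on which \<open>w\<close> takes the value 2.\<close>

lemma no_augmenting_path:
  assumes G: "graph V E src tgt" and e0: "e0 \<in> E" and e1: "e1 \<in> E" "e0 \<noteq> e1"
    and s: "s \<in> {1, -1}" and d: "d \<in> {1, -1}"
    and unit: "unit_on_01_cycles V E src tgt w"
    and w: "w = (\<lambda>x. s * dual_edge e1 x + d * dual_edge e0 x)"
    and P: "unit_chain E P" "P e0 = 0" "P e1 = 0" "is_cycle V E src tgt (\<lambda>x. P x + d * dual_edge e0 x)"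
  shows "(if s = 1 then src e1 else tgt e1) \<notin>
    reachable (residual (E - {e0, e1}) P) src tgt (if s = 1 then tgt e1 else src e1)"
    (is "?tail \<notin> reachable ?A src tgt ?head")
proof
  assume reach: "?tail \<in> reachable ?A src tgt ?head"
  have fin: "finite E" using G by (simp add: graph_def)
  define q where "q = (\<lambda>x. P x + d * dual_edge e0 x + s * dual_edge e1 x)"
  have "unit_chain E q"
    using P(1-3) s d e0 e1 unfolding q_def unit_chain_def dual_edge_def by auto
  moreover have "boundary E src tgt q v = (if v = ?head then 1 else 0) - (if v = ?tail then 1 else 0)"
    if "v \<in> V" for v
  proof -
    have "boundary E src tgt (\<lambda>x. P x + d * dual_edge e0 x) v = 0"
      using P(4) that by (simp add: is_cycle_iff_boundary)
    then show ?thesis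
      using s unfolding q_def boundary_add boundary_scale boundary_dual_edge[OF fin e1(1)] by auto
  qed
  moreover have "{e. \<exists>\<sigma>. ?A e \<sigma>} \<subseteq> E" "\<And>e. q e \<noteq> 0 \<Longrightarrow> \<not> ?A e (q e)"
    unfolding residual_def q_def dual_edge_def by auto
  ultimately obtain p where cycle: "is_01_cycle V E src tgt (\<lambda>e. q e + p e)"
    and p: "\<And>e. p e \<noteq> 0 \<Longrightarrow> ?A e (p e)"
    using closing_path_cycle[OF fin, of q V src tgt ?head ?tail ?A] reach by blast
  have "p e0 = 0" "p e1 = 0" using p unfolding residual_def by auto
  then have "pairing E w (\<lambda>e. q e + p e) = s * s + d * d"
    using P(2,3) e1(2) unfolding w pairing_two_dual_edges[OF fin e0 e1(1)]
    by (simp add: q_def dual_edge_def)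
  then show False using cycle unit[unfolded unit_on_01_cycles_def] s d by auto
qed

text \<open>Every edge crossing the residual cut is used by \<open>P\<close> against the cut, so pairing the cycle
  \<open>P + d e0*\<close> with the coboundary of the cut's indicator counts these edges.\<close>

lemma card_residual_cut_crossing:
  assumes G: "graph V E src tgt" and e0: "e0 \<in> E"
    and P: "P e0 = 0" "P e1 = 0" "is_cycle V E src tgt (\<lambda>x. P x + d * dual_edge e0 x)"
    and T: "T = reachable (residual (E - {e0, e1}) P) src tgt u"
  shows "int (card {e \<in> E - {e0, e1}. (src e \<in> T) \<noteq> (tgt e \<in> T)})
    = (of_bool (tgt e0 \<in> T) - of_bool (src e0 \<in> T)) * d"
proof -
  have fin: "finite E" using G by (simp add: graph_def)
  define g where "g = (\<lambda>v. of_bool (v \<in> T) :: int)"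
  define X where "X = {e \<in> E - {e0, e1}. (src e \<in> T) \<noteq> (tgt e \<in> T)}"
  have crossing: "(g (tgt e) - g (src e)) * P e = - of_bool (e \<in> X)" if "e \<in> E" for e
  proof (cases "e \<in> {e0, e1}")
    case True
    then show ?thesis using P(1,2) unfolding X_def by auto
  next
    case False
    then show ?thesis
      using residual_cut_crossing[OF _ T, of e] that unfolding X_def g_def by auto
  qed
  have "0 = pairing E (\<lambda>e. g (tgt e) - g (src e)) (\<lambda>x. P x + d * dual_edge e0 x)"
    using pairing_coboundary_cycle[OF G P(3)] by simp
  also have "\<dots> = pairing E (\<lambda>e. g (tgt e) - g (src e)) P + (g (tgt e0) - g (src e0)) * d"
    by (simp add: pairing_add pairing_scaled_dual_edge(2)[OF fin e0])
  also have "pairing E (\<lambda>e. g (tgt e) - g (src e)) P = - int (card X)"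
  proof -
    have "E \<inter> X = X" unfolding X_def by auto
    moreover have "pairing E (\<lambda>e. g (tgt e) - g (src e)) P = - (\<Sum>e\<in>E. of_bool (e \<in> X))"
      unfolding pairing_def sum_negf[symmetric] using crossing by (intro sum.cong) auto
    ultimately show ?thesis using fin by simp
  qed
  finally show ?thesis by (simp add: g_def X_def)
qed

text \<open>The vertices reachable from the head of \<open>s e1\<close> in the residual graph of \<open>P\<close> form a cut
  separating the ends of \<open>e1\<close>, crossed by at most one further edge.\<close>

lemma two_coedges_cycle_avoiding_e1:
  assumes G: "graph V E src tgt" and e0: "e0 \<in> E" and e1: "e1 \<in> E" "e0 \<noteq> e1"
    and s: "s \<in> {1, -1}" and d: "d \<in> {1, -1}"
    and unit: "unit_on_01_cycles V E src tgt w"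
    and w: "w = (\<lambda>x. s * dual_edge e1 x + d * dual_edge e0 x)"
    and P: "unit_chain E P" "P e0 = 0" "P e1 = 0" "is_cycle V E src tgt (\<lambda>x. P x + d * dual_edge e0 x)"
  shows "\<exists>f\<in>E. \<exists>\<sigma>\<in>{1, -1::int}. cohomologous V E src tgt w (\<lambda>x. \<sigma> * dual_edge f x)"
proof -
  have fin: "finite E" using G by (simp add: graph_def)
  define head where "head = (if s = 1 then tgt e1 else src e1)"
  define T where "T = reachable (residual (E - {e0, e1}) P) src tgt head"
  define g where "g = (\<lambda>v. of_bool (v \<in> T) :: int)"
  define \<delta> where "\<delta> = (\<lambda>e. g (tgt e) - g (src e))"
  define X where "X = {e \<in> E - {e0, e1}. (src e \<in> T) \<noteq> (tgt e \<in> T)}"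
  have "(if s = 1 then src e1 else tgt e1) \<notin> T"
    unfolding T_def head_def by (rule no_augmenting_path[OF assms])
  moreover have "head \<in> T" unfolding T_def by (rule reachable_start)
  ultimately have \<delta>_e1: "\<delta> e1 = s"
    using s unfolding \<delta>_def g_def head_def by (auto split: if_splits)
  have \<delta>_off_X: "\<delta> e = 0" if "e \<in> E" "e \<noteq> e0" "e \<noteq> e1" "e \<notin> X" for e
    using that unfolding X_def \<delta>_def g_def by auto
  have card_X: "int (card X) = \<delta> e0 * d"
    unfolding X_def \<delta>_def g_def by (rule card_residual_cut_crossing[OF G e0 P(2-4) T_def])
  moreover have "\<delta> e0 \<in> {1, 0, -1}" unfolding \<delta>_def g_def by simp
  ultimately have "card X = 0 \<or> card X = 1" using d by auto
  then show ?thesis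
  proof
    assume "card X = 0"
    then have "\<delta> e0 = 0" using card_X d by auto
    have "X = {}" using \<open>card X = 0\<close> fin by (simp add: X_def)
    have "cohomologous V E src tgt w (\<lambda>x. d * dual_edge e0 x)"
    proof (rule cohomologousI[where g = g])
      fix e assume "e \<in> E"
      then show "w e - d * dual_edge e0 e = g (tgt e) - g (src e)"
        using \<delta>_e1 \<open>\<delta> e0 = 0\<close> \<delta>_off_X[of e] \<open>X = {}\<close> e1(2) unfolding w dual_edge_def \<delta>_def
        by (cases "e = e0"; cases "e = e1") auto
    qed
    then show ?thesis using e0 d by blast
  next
    assume "card X = 1"
    then obtain f where "X = {f}" by (rule card_1_singletonE)
    then have f: "f \<in> E" "f \<noteq> e0" "f \<noteq> e1" "\<delta> f \<in> {1, -1}"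
      unfolding X_def \<delta>_def g_def by auto
    have "\<delta> e0 = d" using card_X \<open>card X = 1\<close> d by auto
    have "cohomologous V E src tgt w (\<lambda>x. - \<delta> f * dual_edge f x)"
    proof (rule cohomologousI[where g = g])
      fix e assume "e \<in> E"
      then show "w e - - \<delta> f * dual_edge f e = g (tgt e) - g (src e)"
        using \<delta>_e1 \<open>\<delta> e0 = d\<close> \<delta>_off_X[of e] \<open>X = {f}\<close> f e1(2) unfolding w dual_edge_def \<delta>_def
        by (cases "e = e0"; cases "e = e1"; cases "e = f") auto
    qed
    then show ?thesis using f by force
  qed
qed

lemma coedge_of_two_coedges:
  assumes G: "graph V E src tgt" and e0: "e0 \<in> E" and e1: "e1 \<in> E" "e0 \<noteq> e1"
    and s: "s \<in> {1, -1}"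
    and unit: "unit_on_01_cycles V E src tgt w"
    and not_cob: "\<not> is_coboundary V E src tgt w"
    and w: "w = (\<lambda>x. s * dual_edge e1 x + d * dual_edge e0 x)"
  shows "\<exists>f\<in>E. \<exists>\<sigma>\<in>{1, -1::int}. cohomologous V E src tgt w (\<lambda>x. \<sigma> * dual_edge f x)"
proof (cases "d = 0")
  case True
  then have "cohomologous V E src tgt w (\<lambda>x. s * dual_edge e1 x)"
    unfolding w by (intro cohomologousI[where g = "\<lambda>_. 0"]) simp
  then show ?thesis using e1 s by blast
next
  case d_nonzero: False
  show ?thesis
  proof (cases "\<exists>C. is_01_cycle V E src tgt C \<and> C e1 = 0 \<and> C e0 \<noteq> 0")
    case False
    then show ?thesis
      using two_coedges_no_cycle_avoiding_e1[OF G e0 e1 unit not_cob w] by blast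
  next
    case True
    then obtain C where C: "is_01_cycle V E src tgt C" "C e1 = 0" "C e0 \<noteq> 0" by blast
    have fin: "finite E" using G by (simp add: graph_def)
    have C_unit: "C x \<in> {1, 0, -1}" for x
      using C(1) by (cases "x \<in> E") (auto simp: is_01_cycle_def is_cycle_def)
    have "pairing E w C = d * C e0"
      using C(2) unfolding w pairing_two_dual_edges[OF fin e0 e1(1)] by simp
    then have d: "d \<in> {1, -1}"
      using C(1,3) C_unit[of e0] d_nonzero unit unfolding unit_on_01_cycles_def by force
    define k where "k = d * C e0"
    have k: "k \<in> {1, -1}" "k * C e0 = d" using d C(3) C_unit[of e0] by (auto simp: k_def)
    define P where "P = (\<lambda>x. k * C x - d * dual_edge e0 x)"
    have "unit_chain E P"
      unfolding unit_chain_def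
    proof (intro conjI allI impI)
      fix x
      show "x \<notin> E \<Longrightarrow> P x = 0" using C(1) e0 by (auto simp: P_def is_01_cycle_def is_cycle_def dual_edge_def)
      show "P x \<in> {1, 0, -1}" using k C_unit[of x] by (auto simp: P_def dual_edge_def)
    qed
    moreover have "P e0 = 0" "P e1 = 0" using k C(2) e1(2) by (auto simp: P_def dual_edge_def)
    moreover have "is_cycle V E src tgt (\<lambda>x. P x + d * dual_edge e0 x)"
      using C(1) by (simp add: P_def is_01_cycle_def is_cycle_iff_boundary boundary_scale)
    ultimately show ?thesis
      using two_coedges_cycle_avoiding_e1[OF G e0 e1 s d unit w] by blast
  qed
qed

lemma unit_on_01_cycles_coedge:
  assumes "finite E" "e \<in> E" "s \<in> {1, -1}"
  shows "unit_on_01_cycles V E src tgt (\<lambda>x. s * dual_edge e x)"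
  using assms by (auto simp: unit_on_01_cycles_def is_01_cycle_def pairing_scaled_dual_edge(1))

lemma unit_on_01_cycles_cohomologous:
  assumes "graph V E src tgt" "cohomologous V E src tgt z w"
  shows "unit_on_01_cycles V E src tgt z \<longleftrightarrow> unit_on_01_cycles V E src tgt w"
  using pairing_cohomologous[OF assms(1) _ assms(2)]
  by (auto simp: unit_on_01_cycles_def is_01_cycle_def)

lemma boundary_superset:
  assumes "finite E" "F \<subseteq> E" "\<forall>e. e \<notin> F \<longrightarrow> c e = 0"
  shows "boundary E src tgt c v = boundary F src tgt c v"
proof -
  have "(\<Sum>e\<in>{e\<in>E. Q e}. c e) = (\<Sum>e\<in>{e\<in>F. Q e}. c e)" for Q
    by (rule sum.mono_neutral_right) (use assms in auto)
  then show ?thesis by (simp add: boundary_def)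
qed

lemma unit_on_01_cycles_subgraph:
  assumes "finite E" "F \<subseteq> E" "unit_on_01_cycles V E src tgt z"
  shows "unit_on_01_cycles V F src tgt z"
  unfolding unit_on_01_cycles_def
proof (intro allI impI)
  fix c assume c: "is_01_cycle V F src tgt c"
  then have supp: "\<forall>e. e \<notin> F \<longrightarrow> c e = 0" by (simp add: is_01_cycle_def is_cycle_def)
  have "is_01_cycle V E src tgt c"
    using c supp assms(2)
    by (auto simp: is_01_cycle_iff_unit_chain unit_chain_def boundary_superset[OF assms(1,2) supp])
  moreover have "pairing E z c = pairing F z c"
    unfolding pairing_def by (rule sum.mono_neutral_right) (use assms supp in auto)
  ultimately show "pairing F z c \<in> {1, 0, -1}"
    using assms(3) unfolding unit_on_01_cycles_def by metis
qed

lemma coedge_if_unit_on_01_cycles: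
  assumes "graph V E src tgt" "\<not> is_coboundary V E src tgt z" "unit_on_01_cycles V E src tgt z"
  shows "\<exists>e\<in>E. \<exists>s\<in>{1, -1::int}. cohomologous V E src tgt z (\<lambda>x. s * dual_edge e x)"
proof -
  have "finite E" using assms(1) by (simp add: graph_def)
  then show ?thesis using assms
  proof (induction E arbitrary: z rule: finite_induct)
    case empty
    then show ?case by (simp add: is_coboundary_def)
  next
    case (insert e0 F)
    note G = insert.prems(1) and not_cob = insert.prems(2) and unit = insert.prems(3)
    have e0: "e0 \<in> insert e0 F" by simp
    have "graph V F src tgt" using G by (simp add: graph_def)
    moreover have "unit_on_01_cycles V F src tgt z"
      using unit_on_01_cycles_subgraph[OF _ _ unit] insert.hyps(1) by blast
    ultimately consider (cob) "is_coboundary V F src tgt z"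
      | (coedge) e1 s where "e1 \<in> F" "s \<in> {1, -1}" "cohomologous V F src tgt z (\<lambda>x. s * dual_edge e1 x)"
      using insert.IH by blast
    then show ?case
    proof cases
      case cob
      then obtain g where g: "\<forall>e\<in>F. z e = g (tgt e) - g (src e)" by (auto simp: is_coboundary_def)
      define d where "d = z e0 - (g (tgt e0) - g (src e0))"
      have co: "cohomologous V (insert e0 F) src tgt z (\<lambda>x. d * dual_edge e0 x)"
        using g insert.hyps(2) by (intro cohomologousI[where g = g]) (auto simp: d_def dual_edge_def)
      then have "d \<in> {1, -1}" by (rule coedge_coefficient_unit[OF G e0 unit not_cob])
      with co show ?thesis by blast
    next
      case coedge
      obtain g where g: "\<And>e. e \<in> F \<Longrightarrow> z e - s * dual_edge e1 e = g (tgt e) - g (src e)"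
        using coedge(3) by (rule cohomologousE) blast
      define d where "d = z e0 - (g (tgt e0) - g (src e0))"
      define w where "w = (\<lambda>x. s * dual_edge e1 x + d * dual_edge e0 x)"
      have "e0 \<noteq> e1" using coedge(1) insert.hyps(2) by blast
      have co: "cohomologous V (insert e0 F) src tgt z w"
      proof (rule cohomologousI[where g = g])
        fix e assume "e \<in> insert e0 F"
        then show "z e - w e = g (tgt e) - g (src e)"
          using g[of e] \<open>e0 \<noteq> e1\<close> insert.hyps(2)
          by (cases "e = e0") (auto simp: w_def d_def dual_edge_def)
      qed
      have "\<exists>f\<in>insert e0 F. \<exists>\<sigma>\<in>{1, -1::int}.
          cohomologous V (insert e0 F) src tgt w (\<lambda>x. \<sigma> * dual_edge f x)"
      proof (rule coedge_of_two_coedges[OF G e0 _ \<open>e0 \<noteq> e1\<close> coedge(2) _ _ w_def])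
        show "e1 \<in> insert e0 F" using coedge(1) by simp
        show "unit_on_01_cycles V (insert e0 F) src tgt w"
          using unit unit_on_01_cycles_cohomologous[OF G co] by simp
        show "\<not> is_coboundary V (insert e0 F) src tgt w"
          using not_cob cohomologous_coboundary[OF co] by blast
      qed
      then show ?thesis using cohomologous_trans[OF co] by blast
    qed
  qed
qed

theorem lemma5p3:
  fixes V :: "'v set" and E :: "'e set" and src tgt :: "'e \<Rightarrow> 'v" and z :: "'e \<Rightarrow> int"
  assumes "graph V E src tgt"
    and "\<not> is_coboundary V E src tgt z"
  shows "(\<exists>e\<in>E. \<exists>s\<in>{1, -1::int}. cohomologous V E src tgt z (\<lambda>e'. s * dual_edge e e'))
     \<longleftrightarrow> (\<forall>c. is_01_cycle V E src tgt c \<longrightarrow> pairing E z c \<in> {1, 0, -1})"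
proof
  assume "\<exists>e\<in>E. \<exists>s\<in>{1, -1::int}. cohomologous V E src tgt z (\<lambda>e'. s * dual_edge e e')"
  then obtain e s where "e \<in> E" "s \<in> {1, -1::int}"
    and co: "cohomologous V E src tgt z (\<lambda>e'. s * dual_edge e e')" by blast
  moreover have "finite E" using assms(1) by (simp add: graph_def)
  ultimately have "unit_on_01_cycles V E src tgt (\<lambda>e'. s * dual_edge e e')"
    by (intro unit_on_01_cycles_coedge)
  then show "\<forall>c. is_01_cycle V E src tgt c \<longrightarrow> pairing E z c \<in> {1, 0, -1}"
    using unit_on_01_cycles_cohomologous[OF assms(1) co] by (simp add: unit_on_01_cycles_def)
next
  assume "\<forall>c. is_01_cycle V E src tgt c \<longrightarrow> pairing E z c \<in> {1, 0, -1}"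
  then show "\<exists>e\<in>E. \<exists>s\<in>{1, -1::int}. cohomologous V E src tgt z (\<lambda>e'. s * dual_edge e e')"
    using coedge_if_unit_on_01_cycles[OF assms] by (simp add: unit_on_01_cycles_def)
qed

end
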